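(* Let $1\le i,j,k,l\le n$ with $i<j$, $k<l$, $i\le k$. Then in ${\boldsymbol U}_{v}(\mathfrak q_n)$: \[ \mathsf E_{i,j}\mathsf E_{k,l}=\begin{cases}\mathsf E_{k,l}\mathsf E_{i,j} & (i<j<k<l\text{ or } i<k<l<j),\\ v^{-1}\mathsf E_{k,l}\mathsf E_{i,j}-\mathsf E_{i,l} & (i<j=k<l),\\ v\,\mathsf E_{k,l}\mathsf E_{i,j} & (i=k<j<l\text{ or } i<k<j=l),\\ \mathsf E_{k,l}\mathsf E_{i,j}+(v-v^{-1})\mathsf E_{i,l}\mathsf E_{k,j} & (i<k<j<l).\end{cases} \]
   Context: Let $v$ be an indeterminate. The quantum queer superalgebra ${\boldsymbol U}_{v}(\mathfrak q_n)$ is the associative superalgebra over $\mathbb Q(v)$ generated by even generators $\mathsf K_i,\mathsf K_i^{-1}$ ($1\le i\le n$), $\mathsf E_j,\mathsf F_j$ ($1\le j\le n-1$) and odd generators $\mathsf K_{\bar i}$ ($1\le i\le n$), $\mathsf E_{\bar j},\mathsf F_{\bar j}$ ($1\le j\le n-1$), subject to the following relations (indices are taken only where they make sense), where $(\epsilon_i,\alpha_j)=\delta_{i,j}-\delta_{i,j+1}$: (QQ1) $\mathsf K_i\mathsf K_i^{-1}=\mathsf K_i^{-1}\mathsf K_i=1$, $\mathsf K_i\mathsf K_j=\mathsf K_j\mathsf K_i$, $\mathsf K_i\mathsf K_{\bar j}=\mathsf K_{\bar j}\mathsf K_i$, $\mathsf K_{\bar i}\mathsf K_{\bar j}+\mathsf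 K_{\bar j}\mathsf K_{\bar i}=2\delta_{i,j}\frac{\mathsf K_i^2-\mathsf K_i^{-2}}{v^2-v^{-2}}$. (QQ2) $\mathsf K_i\mathsf E_j=v^{(\epsilon_i,\alpha_j)}\mathsf E_j\mathsf K_i$, $\mathsf K_i\mathsf E_{\bar j}=v^{(\epsilon_i,\alpha_j)}\mathsf E_{\bar j}\mathsf K_i$, $\mathsf K_i\mathsf F_j=v^{-(\epsilon_i,\alpha_j)}\mathsf F_j\mathsf K_i$, $\mathsf K_i\mathsf F_{\bar j}=v^{-(\epsilon_i,\alpha_j)}\mathsf F_{\bar j}\mathsf K_i$. (QQ3) $\mathsf K_{\bar i}\mathsf E_i-v\mathsf E_i\mathsf K_{\bar i}=\mathsf E_{\bar i}\mathsf K_i^{-1}$, $v\mathsf K_{\bar i}\mathsf E_{i-1}-\mathsf E_{i-1}\mathsf K_{\bar i}=-\mathsf K_i^{-1}\mathsf E_{\overline{i-1}}$, $\mathsf K_{\bar i}\mathsf F_i-v\mathsf F_i\mathsf K_{\bar i}=-\mathsf F_{\bar i}\mathsf K_i$, $v\mathsf K_{\bar i}\mathsf F_{i-1}-\mathsf F_{i-1}\mathsf K_{\bar i}=\mathsf K_i\mathsf F_{\overline{i-1}}$, $\mathsf K_{\bar i}\mathsf E_{\bar i}+v\mathsf E_{\bar i}\mathsf K_{\bar i}=\mathsf E_i\mathsf K_i^{-1}$, $v\mathsf K_{\bar i}\mathsf E_{\overline{i-1}}+\mathsf E_{\overline{i-1}}\mathsf K_{\bar i}=\mathsf K_i^{-1}\mathsf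 E_{i-1}$, $\mathsf K_{\bar i}\mathsf F_{\bar i}+v\mathsf F_{\bar i}\mathsf K_{\bar i}=\mathsf F_i\mathsf K_i$, $v\mathsf K_{\bar i}\mathsf F_{\overline{i-1}}+\mathsf F_{\overline{i-1}}\mathsf K_{\bar i}=\mathsf K_i\mathsf F_{i-1}$, and for $j\ne i,i-1$: $\mathsf K_{\bar i}\mathsf E_j=\mathsf E_j\mathsf K_{\bar i}$, $\mathsf K_{\bar i}\mathsf F_j=\mathsf F_j\mathsf K_{\bar i}$, $\mathsf K_{\bar i}\mathsf E_{\bar j}=-\mathsf E_{\bar j}\mathsf K_{\bar i}$, $\mathsf K_{\bar i}\mathsf F_{\bar j}=-\mathsf F_{\bar j}\mathsf K_{\bar i}$. (QQ4) $\mathsf E_i\mathsf F_j-\mathsf F_j\mathsf E_i=\delta_{i,j}\frac{\mathsf K_i\mathsf K_{i+1}^{-1}-\mathsf K_i^{-1}\mathsf K_{i+1}}{v-v^{-1}}$, $\mathsf E_{\bar i}\mathsf F_{\bar j}+\mathsf F_{\bar j}\mathsf E_{\bar i}=\delta_{i,j}\big(\frac{\mathsf K_i\mathsf K_{i+1}-\mathsf K_i^{-1}\mathsf K_{i+1}^{-1}}{v-v^{-1}}+(v-v^{-1})\mathsf K_{\bar i}\mathsf K_{\overline{i+1}}\big)$, $\mathsf E_i\mathsf F_{\bar j}-\mathsf F_{\bar j}\mathsf E_i=\delta_{i,j}(\mathsf K_{i+1}^{-1}\mathsf K_{\bar i}-\mathsf K_{\overline{i+1}}\mathsf K_i^{-1})$,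 $\mathsf E_{\bar i}\mathsf F_j-\mathsf F_j\mathsf E_{\bar i}=\delta_{i,j}(\mathsf K_{i+1}\mathsf K_{\bar i}-\mathsf K_{\overline{i+1}}\mathsf K_i)$. (QQ5) $\mathsf E_{\bar i}^2=-\frac{v-v^{-1}}{v+v^{-1}}\mathsf E_i^2$, $\mathsf F_{\bar i}^2=\frac{v-v^{-1}}{v+v^{-1}}\mathsf F_i^2$; for $|i-j|\ne1$: $\mathsf E_i\mathsf E_{\bar j}=\mathsf E_{\bar j}\mathsf E_i$, $\mathsf F_i\mathsf F_{\bar j}=\mathsf F_{\bar j}\mathsf F_i$; for $|i-j|>1$: $\mathsf E_i\mathsf E_j=\mathsf E_j\mathsf E_i$, $\mathsf F_i\mathsf F_j=\mathsf F_j\mathsf F_i$, $\mathsf E_{\bar i}\mathsf E_{\bar j}=-\mathsf E_{\bar j}\mathsf E_{\bar i}$, $\mathsf F_{\bar i}\mathsf F_{\bar j}=-\mathsf F_{\bar j}\mathsf F_{\bar i}$; $\mathsf E_i\mathsf E_{i+1}-v\mathsf E_{i+1}\mathsf E_i=\mathsf E_{\bar i}\mathsf E_{\overline{i+1}}+v\mathsf E_{\overline{i+1}}\mathsf E_{\bar i}$, $\mathsf E_i\mathsf E_{\overline{i+1}}-v\mathsf E_{\overline{i+1}}\mathsf E_i=\mathsf E_{\bar i}\mathsf E_{i+1}-v\mathsf E_{i+1}\mathsf E_{\bar i}$, $\mathsf F_i\mathsf F_{i+1}-v\mathsf F_{i+1}\mathsf F_i=-(\mathsf F_{\bar i}\mathsf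 F_{\overline{i+1}}+v\mathsf F_{\overline{i+1}}\mathsf F_{\bar i})$, $\mathsf F_i\mathsf F_{\overline{i+1}}-v\mathsf F_{\overline{i+1}}\mathsf F_i=\mathsf F_{\bar i}\mathsf F_{i+1}-v\mathsf F_{i+1}\mathsf F_{\bar i}$. (QQ6) for $|i-j|=1$: $\mathsf E_i^2X-(v+v^{-1})\mathsf E_iX\mathsf E_i+X\mathsf E_i^2=0$ for $X\in\{\mathsf E_j,\mathsf E_{\bar j}\}$ and $\mathsf F_i^2Y-(v+v^{-1})\mathsf F_iY\mathsf F_i+Y\mathsf F_i^2=0$ for $Y\in\{\mathsf F_j,\mathsf F_{\bar j}\}$. Quantum root vectors: for $1\le i\le n-1$ put $\mathsf E_{i,i+1}=\mathsf E_i$, $\overline{\mathsf E}_{i,i+1}=\mathsf E_{\bar i}$, $\mathsf E_{i+1,i}=\mathsf F_i$, $\overline{\mathsf E}_{i+1,i}=\mathsf F_{\bar i}$, and recursively for $i+1<j\le n$: $\mathsf E_{i,j}=-\mathsf E_{i,j-1}\mathsf E_{j-1}+v^{-1}\mathsf E_{j-1}\mathsf E_{i,j-1}$, $\overline{\mathsf E}_{i,j}=-\mathsf E_{i,j-1}\mathsf E_{\overline{j-1}}+v^{-1}\mathsf E_{\overline{j-1}}\mathsf E_{i,j-1}$, $\mathsf E_{j,i}=-\mathsf F_{j-1}\mathsf E_{j-1,i}+v\mathsf E_{j-1,i}\mathsf F_{j-1}$, $\overline{\mathsf E}_{j,i}=-\mathsf F_{\overline{j-1}}\mathsf E_{j-1,i}+v\mathsf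 E_{j-1,i}\mathsf F_{\overline{j-1}}$. *)

theory Defs
  imports "HOL-Computational_Algebra.Polynomial" "HOL-Computational_Algebra.Fraction_Field"
begin

type_synonym qfun = "rat poly fract"

definition qv :: qfun where "qv = Fract [:0, 1:] 1"

text \<open>A Q(v)-algebra structure on a ring 'a: a unital ring homomorphism from Q(v)
  into the centre of 'a.\<close>
definition qalg :: "(qfun \<Rightarrow> 'a::ring_1) \<Rightarrow> bool" where
  "qalg sc \<longleftrightarrow> sc 1 = 1 \<and> (\<forall>x y. sc (x + y) = sc x + sc y) \<and>
     (\<forall>x y. sc (x * y) = sc x * sc y) \<and> (\<forall>x y. sc x * y = y * sc x)"

text \<open>Defining relations (QQ1)-(QQ6) of U_v(q_n), indices 1-based.
  K, Ki = K^{-1}, Kb = K-bar (1..n); E, F, Eb, Fb (1..n-1).\<close>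
definition qq_rels :: "nat \<Rightarrow> (qfun \<Rightarrow> 'a::ring_1) \<Rightarrow> (nat \<Rightarrow> 'a) \<Rightarrow> (nat \<Rightarrow> 'a) \<Rightarrow> (nat \<Rightarrow> 'a)
    \<Rightarrow> (nat \<Rightarrow> 'a) \<Rightarrow> (nat \<Rightarrow> 'a) \<Rightarrow> (nat \<Rightarrow> 'a) \<Rightarrow> (nat \<Rightarrow> 'a) \<Rightarrow> bool" where
  "qq_rels n sc K Ki Kb E F Eb Fb \<longleftrightarrow>
   (let v = sc qv in
   \<comment> \<open>QQ1\<close>
   (\<forall>i\<in>{1..n}. \<forall>j\<in>{1..n}.
      K i * Ki i = 1 \<and> Ki i * K i = 1 \<and> K i * K j = K j * K i \<and> K i * Kb j = Kb j * K i \<and>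
      Kb i * Kb j + Kb j * Kb i =
        (if i = j then sc (2 * inverse (qv\<^sup>2 - inverse (qv\<^sup>2))) * (K i ^ 2 - Ki i ^ 2) else 0)) \<and>
   \<comment> \<open>QQ2\<close>
   (\<forall>i\<in>{1..n}. \<forall>j\<in>{1..n-1}.
      let e = (of_bool (i = j) - of_bool (i = j + 1) :: int) in
      K i * E j = sc (qv powi e) * E j * K i \<and>
      K i * Eb j = sc (qv powi e) * Eb j * K i \<and>
      K i * F j = sc (qv powi (- e)) * F j * K i \<and>
      K i * Fb j = sc (qv powi (- e)) * Fb j * K i) \<and>
   \<comment> \<open>QQ3\<close>
   (\<forall>i\<in>{1..n}.
      (i \<le> n - 1 \<longrightarrow>
         Kb i * E i - v * E i * Kb i = Eb i * Ki i \<and>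
         Kb i * F i - v * F i * Kb i = - (Fb i * K i) \<and>
         Kb i * Eb i + v * Eb i * Kb i = E i * Ki i \<and>
         Kb i * Fb i + v * Fb i * Kb i = F i * K i) \<and>
      (2 \<le> i \<longrightarrow>
         v * Kb i * E (i - 1) - E (i - 1) * Kb i = - (Ki i * Eb (i - 1)) \<and>
         v * Kb i * F (i - 1) - F (i - 1) * Kb i = K i * Fb (i - 1) \<and>
         v * Kb i * Eb (i - 1) + Eb (i - 1) * Kb i = Ki i * E (i - 1) \<and>
         v * Kb i * Fb (i - 1) + Fb (i - 1) * Kb i = K i * F (i - 1)) \<and>
      (\<forall>j\<in>{1..n-1}. j \<noteq> i \<and> j + 1 \<noteq> i \<longrightarrow>
         Kb i * E j = E j * Kb i \<and> Kb i * F j = F j * Kb i \<and>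
         Kb i * Eb j = - (Eb j * Kb i) \<and> Kb i * Fb j = - (Fb j * Kb i))) \<and>
   \<comment> \<open>QQ4\<close>
   (\<forall>i\<in>{1..n-1}. \<forall>j\<in>{1..n-1}.
      E i * F j - F j * E i =
        (if i = j then sc (inverse (qv - inverse qv)) * (K i * Ki (i + 1) - Ki i * K (i + 1)) else 0) \<and>
      Eb i * Fb j + Fb j * Eb i =
        (if i = j then sc (inverse (qv - inverse qv)) * (K i * K (i + 1) - Ki i * Ki (i + 1))
                     + sc (qv - inverse qv) * Kb i * Kb (i + 1) else 0) \<and>
      E i * Fb j - Fb j * E i =
        (if i = j then Ki (i + 1) * Kb i - Kb (i + 1) * Ki i else 0) \<and>
      Eb i * F j - F j * Eb i =
        (if i = j then K (i + 1) * Kb i - Kb (i + 1) * K i else 0)) \<and>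
   \<comment> \<open>QQ5\<close>
   (\<forall>i\<in>{1..n-1}.
      Eb i ^ 2 = - (sc ((qv - inverse qv) / (qv + inverse qv)) * E i ^ 2) \<and>
      Fb i ^ 2 = sc ((qv - inverse qv) / (qv + inverse qv)) * F i ^ 2) \<and>
   (\<forall>i\<in>{1..n-1}. \<forall>j\<in>{1..n-1}. i \<noteq> j + 1 \<and> j \<noteq> i + 1 \<longrightarrow>
      E i * Eb j = Eb j * E i \<and> F i * Fb j = Fb j * F i) \<and>
   (\<forall>i\<in>{1..n-1}. \<forall>j\<in>{1..n-1}. j + 1 < i \<or> i + 1 < j \<longrightarrow>
      E i * E j = E j * E i \<and> F i * F j = F j * F i \<and>
      Eb i * Eb j = - (Eb j * Eb i) \<and> Fb i * Fb j = - (Fb j * Fb i)) \<and>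
   (\<forall>i\<in>{1..n-1}. i + 1 \<le> n - 1 \<longrightarrow>
      E i * E (i + 1) - v * E (i + 1) * E i = Eb i * Eb (i + 1) + v * Eb (i + 1) * Eb i \<and>
      E i * Eb (i + 1) - v * Eb (i + 1) * E i = Eb i * E (i + 1) - v * E (i + 1) * Eb i \<and>
      F i * F (i + 1) - v * F (i + 1) * F i = - (Fb i * Fb (i + 1) + v * Fb (i + 1) * Fb i) \<and>
      F i * Fb (i + 1) - v * Fb (i + 1) * F i = Fb i * F (i + 1) - v * F (i + 1) * Fb i) \<and>
   \<comment> \<open>QQ6\<close>
   (\<forall>i\<in>{1..n-1}. \<forall>j\<in>{1..n-1}. i = j + 1 \<or> j = i + 1 \<longrightarrow>
      (\<forall>X\<in>{E j, Eb j}. E i ^ 2 * X - sc (qv + inverse qv) * E i * X * E i + X * E i ^ 2 = 0) \<and>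
      (\<forall>Y\<in>{F j, Fb j}. F i ^ 2 * Y - sc (qv + inverse qv) * F i * Y * F i + Y * F i ^ 2 = 0)))"

text \<open>Quantum root vectors E_{i,j} (i < j): E_{i,i+1} = E_i,
  E_{i,j+1} = - E_{i,j} E_j + v^{-1} E_j E_{i,j}. Parameter w stands for v^{-1}.
  Values for j \<le> i are irrelevant.\<close>
fun Eroot :: "'a::ring_1 \<Rightarrow> (nat \<Rightarrow> 'a) \<Rightarrow> nat \<Rightarrow> nat \<Rightarrow> 'a" where
  "Eroot w E i 0 = 0"
| "Eroot w E i (Suc j) =
     (if j < i then 0 else if j = i then E i
      else - (Eroot w E i j * E j) + w * E j * Eroot w E i j)"

end

theory Submission
  imports Defs
begin

(* Write [X, Y] = - X Y + v^-1 Y X, so that E_(a,b+1) = [E_(a,b), E_b]. The Serre relations between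
  E_p and E_(p+1) say exactly that E_p and E_(p+1) both q-commute (X Y = v Y X) with [E_p, E_(p+1)].
  The whole lemma rests on one computation in rank three: if X12 and X34 commute and the adjacent
  pairs among X12, X23, X34 satisfy these q-commutation relations, then so do X12, X13 with X14 and
  X14 with X24, X34, while X23 commutes with X14 (here v + v^-1 must be invertible) and
  X13 X24 = X24 X13 + (v - v^-1) X14 X23, where X13 = [X12, X23], X24 = [X23, X34] and
  X14 = [X13, X34] = [X12, X24]. As E_(a,c) = [E_(a,b), E_(b,c)] for all a < b < c, induction on
  c - a propagates the Serre-type relations from the simple root vectors to all pairs E_(a,b),
  E_(b,c), and each case of the lemma is an instance of the rank-three relations. *)

lemma qv_neq_0: "qv \<noteq> 0"
  by (simp add: qv_def Zero_fract_def eq_fract)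

lemma qv_plus_inverse_neq_0: "qv + inverse qv \<noteq> 0"
  by (simp add: qv_def Zero_fract_def eq_fract one_pCons)

lemma left_commute_if_commute: "(x::'a::semigroup_mult) * y = y * x \<Longrightarrow> x * (y * z) = y * (x * z)"
  by (metis mult.assoc)

definition qbracket :: "'a::ring_1 \<Rightarrow> 'a \<Rightarrow> 'a \<Rightarrow> 'a" where
  "qbracket w X Y = - (X * Y) + w * Y * X"

locale qring =
  fixes v w :: "'a::ring_1"
  assumes v_central: "v * x = x * v"
    and v_w_inverse: "v * w = 1"
begin

lemma w_v_inverse: "w * v = 1"
  using v_central v_w_inverse by metis

lemma w_central: "w * x = x * w"
  by (metis mult.assoc mult_1_left mult_1_right v_central v_w_inverse)

(* Only ever used instantiated at non-scalar x: for x = w the second equation rewrites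
  w * (w * y) to itself and the simplifier loops. *)
lemma central_left_commute: "x * (v * y) = v * (x * y)" "x * (w * y) = w * (x * y)"
  by (metis mult.assoc v_central, metis mult.assoc w_central)

lemma v_w_cancel: "v * (w * y) = y" "w * (v * y) = y"
  by (simp_all add: mult.assoc[symmetric] v_w_inverse w_v_inverse)

abbreviation br :: "'a \<Rightarrow> 'a \<Rightarrow> 'a" where "br \<equiv> qbracket w"

lemma qbracket_zero [simp]: "br 0 Y = 0" "br X 0 = 0"
  by (simp_all add: qbracket_def)

lemma commute_qbracket:
  assumes "X * P = P * X" "X * Q = Q * X"
  shows "X * br P Q = br P Q * X"
  using assms left_commute_if_commute[OF assms(1)] left_commute_if_commute[OF assms(2)]
  by (simp add: qbracket_def algebra_simps central_left_commute[of X] w_central[of X, symmetric])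

lemma qbracket_assoc:
  assumes "X * Z = Z * X"
  shows "br (br X Y) Z = br X (br Y Z)"
  using assms left_commute_if_commute[OF assms]
  by (simp add: qbracket_def algebra_simps v_w_cancel
    central_left_commute[of X] central_left_commute[of Y] central_left_commute[of Z])

lemma qcomm_qbracket_left:
  assumes "X * Z = Z * X"
  shows "X * br Y Z - v * br Y Z * X = br (X * Y - v * Y * X) Z"
  using assms left_commute_if_commute[OF assms]
  by (simp add: qbracket_def algebra_simps v_w_cancel
    central_left_commute[of X] central_left_commute[of Y] central_left_commute[of Z])

lemma qcomm_qbracket_right:
  assumes "X * Z = Z * X"
  shows "br X Y * Z - v * Z * br X Y = br X (Y * Z - v * Z * Y)"
  using assms left_commute_if_commute[OF assms]
  by (simp add: qbracket_def algebra_simps v_w_cancel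
    central_left_commute[of X] central_left_commute[of Y] central_left_commute[of Z])

lemma serre_imp_qcomm_left:
  assumes "X ^ 2 * Y - (v + w) * X * Y * X + Y * X ^ 2 = 0"
  shows "X * br X Y = v * br X Y * X"
proof -
  have "X * br X Y - v * br X Y * X = - (X ^ 2 * Y - (v + w) * X * Y * X + Y * X ^ 2)"
    by (simp add: qbracket_def power2_eq_square algebra_simps v_w_cancel
      central_left_commute[of X] central_left_commute[of Y])
  then show ?thesis
    using assms by simp
qed

lemma serre_imp_qcomm_right:
  assumes "Y ^ 2 * X - (v + w) * Y * X * Y + X * Y ^ 2 = 0"
  shows "br X Y * Y = v * Y * br X Y"
proof -
  have "br X Y * Y - v * Y * br X Y = - (Y ^ 2 * X - (v + w) * Y * X * Y + X * Y ^ 2)"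
    by (simp add: qbracket_def power2_eq_square algebra_simps v_w_cancel
      central_left_commute[of X] central_left_commute[of Y])
  then show ?thesis
    using assms by simp
qed

end

locale qring_qint2_unit = qring +
  assumes qint2_unit: "\<exists>u. u * (v + w) = 1"
begin

lemma qint2_cancel: "(v + w) * x = 0 \<Longrightarrow> x = 0"
proof -
  assume "(v + w) * x = 0"
  moreover obtain u where "u * (v + w) = 1"
    using qint2_unit by blast
  ultimately show "x = 0"
    by (metis mult.assoc mult_1_left mult_zero_right)
qed

(* X_ab plays the role of the root vector E_(a,b) of an A_3 configuration. *)
context
  fixes X12 X23 X34 X13 X24 X14 :: 'a
  assumes X13_def: "X13 = br X12 X23"
    and X24_def: "X24 = br X23 X34"
    and X14_def: "X14 = br X13 X34"
    and commute_12_34: "X12 * X34 = X34 * X12"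
    and qcomm_12_13: "X12 * X13 = v * X13 * X12"
    and qcomm_13_23: "X13 * X23 = v * X23 * X13"
    and qcomm_23_24: "X23 * X24 = v * X24 * X23"
    and qcomm_24_34: "X24 * X34 = v * X34 * X24"
begin

lemmas central_left_commute_X =
  central_left_commute[of X12] central_left_commute[of X23] central_left_commute[of X34]
  central_left_commute[of X13] central_left_commute[of X24] central_left_commute[of X14]

lemma X14_eq: "X14 = br X12 X24"
  unfolding X14_def X13_def X24_def by (rule qbracket_assoc[OF commute_12_34])

lemma qcomm_12_14: "X12 * X14 = v * X14 * X12"
  using qcomm_qbracket_left[OF commute_12_34, of X13] qcomm_12_13 by (simp add: X14_def)

lemma qcomm_14_34: "X14 * X34 = v * X34 * X14"
  using qcomm_qbracket_right[OF commute_12_34, of X24] qcomm_24_34 by (simp add: X14_eq)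

lemma qcomm_23_14_defect: "X23 * X14 - w * w * (X14 * X23) = w * (X13 * X24 - X24 * X13)"
proof -
  have X23_X13: "X23 * X13 = w * X13 * X23"
    using qcomm_13_23 by (simp add: mult.assoc v_w_cancel central_left_commute_X)
  have X23_X34: "X23 * X34 = w * X34 * X23 - X24"
    by (simp add: X24_def qbracket_def)
  have "X23 * X14 = - (X23 * X13) * X34 + w * (X23 * X34) * X13"
    by (simp add: X14_def qbracket_def algebra_simps central_left_commute_X)
  also have "\<dots> = - w * X13 * (w * X34 * X23 - X24) + w * (w * X34 * X23 - X24) * X13"
    by (simp add: X23_X13 X23_X34 mult.assoc)
  also have "\<dots> = - w * w * X13 * X34 * X23 + w * w * X34 * (X23 * X13)
                    + w * (X13 * X24 - X24 * X13)"
    by (simp add: algebra_simps central_left_commute_X)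
  also have "\<dots> = w * w * (X14 * X23) + w * (X13 * X24 - X24 * X13)"
    by (simp add: X23_X13 X14_def qbracket_def algebra_simps v_w_cancel central_left_commute_X)
  finally show ?thesis
    by simp
qed

lemma qcomm_14_23_defect: "X14 * X23 - w * w * (X23 * X14) = w * (X13 * X24 - X24 * X13)"
proof -
  have X24_X23: "X24 * X23 = w * X23 * X24"
    using qcomm_23_24 by (simp add: mult.assoc v_w_cancel central_left_commute_X)
  have X12_X23: "X12 * X23 = w * X23 * X12 - X13"
    by (simp add: X13_def qbracket_def)
  have "X14 * X23 = - X12 * (X24 * X23) + w * X24 * (X12 * X23)"
    by (simp add: X14_eq qbracket_def algebra_simps central_left_commute_X)
  also have "\<dots> = - w * (X12 * X23) * X24 + w * X24 * (X12 * X23)"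
    by (simp add: X24_X23 algebra_simps central_left_commute_X)
  also have "\<dots> = - w * (w * X23 * X12 - X13) * X24 + w * X24 * (w * X23 * X12 - X13)"
    by (simp only: X12_X23)
  also have "\<dots> = - w * w * X23 * X12 * X24 + w * w * (X24 * X23) * X12
                    + w * (X13 * X24 - X24 * X13)"
    by (simp add: algebra_simps central_left_commute_X)
  also have "\<dots> = w * w * (X23 * X14) + w * (X13 * X24 - X24 * X13)"
    by (simp add: X24_X23 X14_eq qbracket_def algebra_simps v_w_cancel central_left_commute_X)
  finally show ?thesis
    by simp
qed

lemma commute_23_14: "X23 * X14 = X14 * X23"
proof -
  have "(v + w) * (X23 * X14 - X14 * X23) =
      v * ((X23 * X14 - w * w * (X14 * X23)) - (X14 * X23 - w * w * (X23 * X14)))"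
    by (simp add: algebra_simps v_w_cancel central_left_commute_X)
  also have "\<dots> = 0"
    by (simp only: qcomm_23_14_defect qcomm_14_23_defect diff_self mult_zero_right)
  finally have "X23 * X14 - X14 * X23 = 0"
    by (rule qint2_cancel)
  then show ?thesis
    by simp
qed

lemma crossing_13_24: "X13 * X24 = X24 * X13 + (v - w) * X14 * X23"
proof -
  have "(v - w) * X14 * X23 = v * (X23 * X14 - w * w * (X14 * X23))"
    by (simp add: commute_23_14 algebra_simps v_w_cancel central_left_commute_X)
  also have "\<dots> = X13 * X24 - X24 * X13"
    by (simp only: qcomm_23_14_defect v_w_cancel)
  finally show ?thesis
    by (simp add: algebra_simps)
qed

lemma qcomm_13_14: "X13 * X14 = v * X14 * X13"
proof -
  have X13_X12: "X13 * X12 = w * X12 * X13"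
    using qcomm_12_13 by (simp add: mult.assoc v_w_cancel central_left_commute_X)
  have X14_X24: "w * X24 * X12 - X12 * X24 = X14"
    by (simp add: X14_eq qbracket_def)
  have X23_X12: "X23 * X12 - v * X12 * X23 = v * X13"
    by (simp add: X13_def qbracket_def algebra_simps v_w_cancel central_left_commute_X)
  have "X13 * X14 = w * (X13 * X24) * X12 - (X13 * X12) * X24"
    by (simp add: X14_eq qbracket_def algebra_simps central_left_commute_X)
  also have "\<dots> = w * (X13 * X24) * X12 - w * X12 * (X13 * X24)"
    by (simp add: X13_X12 algebra_simps central_left_commute_X)
  also have "\<dots> = w * (X24 * X13 + (v - w) * X14 * X23) * X12
                    - w * X12 * (X24 * X13 + (v - w) * X14 * X23)"
    by (simp only: crossing_13_24)
  also have "\<dots> = w * X24 * (X13 * X12) - w * X12 * X24 * X13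
                    + w * (v - w) * (X14 * X23 * X12 - (X12 * X14) * X23)"
    by (simp add: algebra_simps central_left_commute_X)
  also have "\<dots> = w * (w * X24 * X12 - X12 * X24) * X13
                    + w * (v - w) * X14 * (X23 * X12 - v * X12 * X23)"
    by (simp add: X13_X12 qcomm_12_14 algebra_simps central_left_commute_X)
  also have "\<dots> = w * X14 * X13 + w * (v - w) * X14 * (v * X13)"
    by (simp only: X14_X24 X23_X12)
  also have "\<dots> = v * X14 * X13"
    by (simp add: algebra_simps v_w_cancel central_left_commute_X)
  finally show ?thesis .
qed

lemma qcomm_14_24: "X14 * X24 = v * X24 * X14"
proof -
  have X34_X24: "X34 * X24 = w * X24 * X34"
    using qcomm_24_34 by (simp add: mult.assoc v_w_cancel central_left_commute_X)
  have X34_X14: "X34 * X14 = w * X14 * X34"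
    using qcomm_14_34 by (simp add: mult.assoc v_w_cancel central_left_commute_X)
  have X23_X34: "w * X34 * X23 - X23 * X34 = X24"
    by (simp add: X24_def qbracket_def)
  have "X14 * X24 = - X13 * (X34 * X24) + w * X34 * (X13 * X24)"
    by (simp add: X14_def qbracket_def algebra_simps central_left_commute_X)
  also have "\<dots> = - w * (X13 * X24) * X34 + w * X34 * (X13 * X24)"
    by (simp add: X34_X24 algebra_simps central_left_commute_X)
  also have "\<dots> = - w * (X24 * X13 + (v - w) * X14 * X23) * X34
                    + w * X34 * (X24 * X13 + (v - w) * X14 * X23)"
    by (simp only: crossing_13_24)
  also have "\<dots> = - w * X24 * X13 * X34 + w * (X34 * X24) * X13
                    + w * (v - w) * ((X34 * X14) * X23 - X14 * X23 * X34)"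
    by (simp add: algebra_simps central_left_commute_X)
  also have "\<dots> = - w * X24 * X13 * X34 + w * w * X24 * X34 * X13
                    + w * (v - w) * X14 * (w * X34 * X23 - X23 * X34)"
    by (simp add: X34_X24 X34_X14 algebra_simps central_left_commute_X)
  also have "\<dots> = - w * X24 * X13 * X34 + w * w * X24 * X34 * X13 + w * (v - w) * X14 * X24"
    by (simp only: X23_X34)
  also have "\<dots> = w * X24 * X14 + w * (v - w) * X14 * X24"
    by (simp add: X14_def qbracket_def algebra_simps central_left_commute_X)
  finally have eq: "X14 * X24 = w * X24 * X14 + w * (v - w) * X14 * X24" .
  \<comment> \<open>as w (v - w) = 1 - w^2, this says w^2 X14 X24 = w X24 X14\<close>
  have "X14 * X24 = v * v * (X14 * X24 - w * (v - w) * X14 * X24)"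
    by (simp add: algebra_simps v_w_cancel central_left_commute_X)
  also have "\<dots> = v * v * (w * X24 * X14)"
    using eq by (metis add_diff_cancel_right')
  also have "\<dots> = v * X24 * X14"
    by (simp add: algebra_simps v_w_cancel central_left_commute_X)
  finally show ?thesis .
qed

end

end

lemma Eroot_Suc_self: "Eroot w E i (Suc i) = E i"
  by simp

lemma Eroot_Suc: "i < j \<Longrightarrow> Eroot w E i (Suc j) = qbracket w (Eroot w E i j) (E j)"
  by (simp add: qbracket_def)

declare Eroot.simps [simp del]

lemma (in qring) commute_Eroot:
  assumes "i < j" and "\<And>p. i \<le> p \<Longrightarrow> p < j \<Longrightarrow> X * E p = E p * X"
  shows "X * Eroot w E i j = Eroot w E i j * X"
  using assms
proof (induction j)
  case 0
  then show ?case by simp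
next
  case (Suc j)
  show ?case
  proof (cases "j = i")
    case True
    then show ?thesis
      using Suc.prems by (simp add: Eroot_Suc_self)
  next
    case False
    with Suc.prems have "i < j"
      by simp
    with Suc show ?thesis
      by (simp add: Eroot_Suc commute_qbracket)
  qed
qed

locale qroot_vectors = qring_qint2_unit v w for v w :: "'a::ring_1" +
  fixes E :: "nat \<Rightarrow> 'a" and n :: nat
  assumes E_commute: "\<lbrakk>1 \<le> p; p + 1 < q; q < n\<rbrakk> \<Longrightarrow> E p * E q = E q * E p"
    and E_serre_left: "\<lbrakk>1 \<le> p; p + 1 < n\<rbrakk> \<Longrightarrow>
      E p ^ 2 * E (p + 1) - (v + w) * E p * E (p + 1) * E p + E (p + 1) * E p ^ 2 = 0"
    and E_serre_right: "\<lbrakk>1 \<le> p; p + 1 < n\<rbrakk> \<Longrightarrow>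
      E (p + 1) ^ 2 * E p - (v + w) * E (p + 1) * E p * E (p + 1) + E p * E (p + 1) ^ 2 = 0"
begin

abbreviation R :: "nat \<Rightarrow> nat \<Rightarrow> 'a" where
  "R \<equiv> Eroot w E"

lemma E_commute_Eroot: "\<lbrakk>1 \<le> i; i < j; j < q; q < n\<rbrakk> \<Longrightarrow> E q * R i j = R i j * E q"
  by (rule commute_Eroot) (auto intro!: E_commute[symmetric])

lemma Eroot_commute_disjoint:
  "\<lbrakk>1 \<le> i; i < j; j < k; k < l; l \<le> n\<rbrakk> \<Longrightarrow> R i j * R k l = R k l * R i j"
  by (rule commute_Eroot) (auto intro!: E_commute_Eroot[symmetric])

lemma Eroot_split: "\<lbrakk>1 \<le> i; i < j; j < l; l \<le> n\<rbrakk> \<Longrightarrow> R i l = br (R i j) (R j l)"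
proof (induction l)
  case 0
  then show ?case by simp
next
  case (Suc m)
  show ?case
  proof (cases "j = m")
    case True
    with Suc.prems show ?thesis
      by (simp add: Eroot_Suc Eroot_Suc_self)
  next
    case False
    with Suc.prems have "j < m"
      by simp
    have "R i (Suc m) = br (br (R i j) (R j m)) (E m)"
      using Suc \<open>j < m\<close> by (simp add: Eroot_Suc)
    also have "\<dots> = br (R i j) (br (R j m) (E m))"
      using Suc.prems \<open>j < m\<close> by (simp add: qbracket_assoc E_commute_Eroot)
    finally show ?thesis
      using \<open>j < m\<close> by (simp add: Eroot_Suc)
  qed
qed

lemma Eroot_adjacent:
  "\<lbrakk>1 \<le> i; i < j; j < l; l \<le> n\<rbrakk> \<Longrightarrow> R i j * R j l = w * R j l * R i j - R i l"
  by (simp add: Eroot_split[of i j l] qbracket_def)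

(* Equivalent to the Serre relations between R a b and R b c. *)
definition qcomm_triple :: "nat \<Rightarrow> nat \<Rightarrow> nat \<Rightarrow> bool" where
  "qcomm_triple a b c \<longleftrightarrow>
     R a b * R a c = v * R a c * R a b \<and> R a c * R b c = v * R b c * R a c"

lemma Eroot_A3:
  assumes "1 \<le> a" "a < b" "b < c" "c < d" "d \<le> n"
    and "qcomm_triple a b c" "qcomm_triple b c d"
  shows "qcomm_triple a b d" "qcomm_triple a c d"
    and "R b c * R a d = R a d * R b c"
    and "R a c * R b d = R b d * R a c + (v - w) * R a d * R b c"
proof -
  have A3:
    "R a c = br (R a b) (R b c)" "R b d = br (R b c) (R c d)" "R a d = br (R a c) (R c d)"
    "R a b * R c d = R c d * R a b"
    "R a b * R a c = v * R a c * R a b" "R a c * R b c = v * R b c * R a c"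
    "R b c * R b d = v * R b d * R b c" "R b d * R c d = v * R c d * R b d"
    using assms Eroot_split[of a b c] Eroot_split[of b c d] Eroot_split[of a c d]
      Eroot_commute_disjoint[of a b c d]
    by (simp_all add: qcomm_triple_def)
  show "qcomm_triple a b d" "qcomm_triple a c d"
    using qcomm_12_14[OF A3] qcomm_14_24[OF A3] qcomm_13_14[OF A3] qcomm_14_34[OF A3]
    by (simp_all add: qcomm_triple_def)
  show "R b c * R a d = R a d * R b c"
    by (rule commute_23_14[OF A3])
  show "R a c * R b d = R b d * R a c + (v - w) * R a d * R b c"
    by (rule crossing_13_24[OF A3])
qed

lemma qcomm_triple_Eroot: "\<lbrakk>1 \<le> i; i < j; j < l; l \<le> n\<rbrakk> \<Longrightarrow> qcomm_triple i j l"
proof (induction "l - i" arbitrary: i j l rule: less_induct)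
  case less
  consider (right_long) "j + 1 < l" | (left_long) "j + 1 = l" "i + 1 < j"
    | (simple) "j = i + 1" "l = j + 1"
    using less.prems by linarith
  then show ?case
  proof cases
    case right_long
    with less have "qcomm_triple i j (l - 1)" "qcomm_triple j (l - 1) l"
      by (simp_all add: less.hyps)
    with less.prems right_long show ?thesis
      using Eroot_A3(1)[of i j "l - 1" l] by simp
  next
    case left_long
    with less have "qcomm_triple i (i + 1) j" "qcomm_triple (i + 1) j l"
      by (simp_all add: less.hyps)
    with less.prems left_long show ?thesis
      using Eroot_A3(2)[of i "i + 1" j l] by simp
  next
    case simple
    with less.prems have "R i j = E i" "R j l = E (i + 1)" "R i l = br (E i) (E (i + 1))"
      by (simp_all add: Eroot_Suc_self Eroot_Suc)
    with less.prems simple show ?thesis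
      using serre_imp_qcomm_left[OF E_serre_left] serre_imp_qcomm_right[OF E_serre_right]
      by (simp add: qcomm_triple_def)
  qed
qed

lemma Eroot_commute_nested:
  "\<lbrakk>1 \<le> i; i < k; k < l; l < j; j \<le> n\<rbrakk> \<Longrightarrow> R i j * R k l = R k l * R i j"
  using Eroot_A3(3)[of i k l j] qcomm_triple_Eroot[of i k l] qcomm_triple_Eroot[of k l j] by simp

lemma Eroot_crossing:
  "\<lbrakk>1 \<le> i; i < k; k < j; j < l; l \<le> n\<rbrakk> \<Longrightarrow>
    R i j * R k l = R k l * R i j + (v - w) * R i l * R k j"
  using Eroot_A3(4)[of i k j l] qcomm_triple_Eroot[of i k j] qcomm_triple_Eroot[of k j l] by simp

end

lemma qalg_diff: "qalg sc \<Longrightarrow> sc (x - y) = sc x - sc y"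
  unfolding qalg_def by (metis add_diff_cancel diff_add_cancel)

lemma qalg_inverse:
  assumes "qalg sc" and "x \<noteq> 0"
  shows "sc x * sc (inverse x) = 1" "sc (inverse x) * sc x = 1"
  using assms unfolding qalg_def by (metis right_inverse left_inverse)+

lemma qroot_vectors_of_qq_rels:
  assumes alg: "qalg sc" and rels: "qq_rels n sc K Ki Kb E F Eb Fb"
  shows "qroot_vectors (sc qv) (sc (inverse qv)) E n"
proof unfold_locales
  have sc_add: "sc (x + y) = sc x + sc y" for x y
    using alg by (simp add: qalg_def)
  show "sc qv * x = x * sc qv" for x
    using alg by (simp add: qalg_def)
  show "sc qv * sc (inverse qv) = 1"
    using qalg_inverse(1)[OF alg qv_neq_0] .
  show "\<exists>u. u * (sc qv + sc (inverse qv)) = 1"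
    using qalg_inverse(2)[OF alg qv_plus_inverse_neq_0] sc_add by metis
  have QQ5: "\<forall>i\<in>{1..n-1}. \<forall>j\<in>{1..n-1}. j + 1 < i \<or> i + 1 < j \<longrightarrow> E i * E j = E j * E i"
    using rels unfolding qq_rels_def Let_def by blast
  have QQ6: "\<forall>i\<in>{1..n-1}. \<forall>j\<in>{1..n-1}. i = j + 1 \<or> j = i + 1 \<longrightarrow>
      E i ^ 2 * E j - sc (qv + inverse qv) * E i * E j * E i + E j * E i ^ 2 = 0"
    using rels unfolding qq_rels_def Let_def by blast
  show "E p * E q = E q * E p" if "1 \<le> p" "p + 1 < q" "q < n" for p q
    using QQ5 that by auto
  show "E p ^ 2 * E (p + 1) - (sc qv + sc (inverse qv)) * E p * E (p + 1) * E p
      + E (p + 1) * E p ^ 2 = 0"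
    and "E (p + 1) ^ 2 * E p - (sc qv + sc (inverse qv)) * E (p + 1) * E p * E (p + 1)
      + E p * E (p + 1) ^ 2 = 0"
    if "1 \<le> p" "p + 1 < n" for p
    using that QQ6[rule_format, of p "p + 1"] QQ6[rule_format, of "p + 1" p]
    by (simp_all add: sc_add)
qed

theorem lemma2p8:
  fixes sc :: "qfun \<Rightarrow> 'a::ring_1"
    and K Ki Kb E F Eb Fb :: "nat \<Rightarrow> 'a"
    and n i j k l :: nat
  assumes alg: "qalg sc"
    and rels: "qq_rels n sc K Ki Kb E F Eb Fb"
    and idx: "1 \<le> i" "i < j" "j \<le> n" "1 \<le> k" "k < l" "l \<le> n" "i \<le> k"
  shows "let v = sc qv; vi = sc (inverse qv); R = Eroot vi E in
     ((i < j \<and> j < k \<and> k < l) \<or> (i < k \<and> k < l \<and> l < j) \<longrightarrow>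
        R i j * R k l = R k l * R i j) \<and>
     (i < j \<and> j = k \<and> k < l \<longrightarrow>
        R i j * R k l = vi * R k l * R i j - R i l) \<and>
     ((i = k \<and> k < j \<and> j < l) \<or> (i < k \<and> k < j \<and> j = l) \<longrightarrow>
        R i j * R k l = v * R k l * R i j) \<and>
     (i < k \<and> k < j \<and> j < l \<longrightarrow>
        R i j * R k l = R k l * R i j + sc (qv - inverse qv) * R i l * R k j)"
proof -
  interpret qroot_vectors "sc qv" "sc (inverse qv)" E n
    using alg rels by (rule qroot_vectors_of_qq_rels)
  show ?thesis
    unfolding Let_def qalg_diff[OF alg]
  proof (intro conjI impI; (elim disjE conjE)?)
    show "R i j * R k l = R k l * R i j" if "j < k" "k < l"
      by (rule Eroot_commute_disjoint) (use that idx in auto)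
    show "R i j * R k l = R k l * R i j" if "i < k" "k < l" "l < j"
      by (rule Eroot_commute_nested) (use that idx in auto)
    show "R i j * R k l = sc (inverse qv) * R k l * R i j - R i l" if "j = k" "k < l"
      using that idx by (simp add: Eroot_adjacent)
    show "R i j * R k l = sc qv * R k l * R i j" if "i = k" "k < j" "j < l"
      using that idx qcomm_triple_Eroot[of i j l] by (simp add: qcomm_triple_def)
    show "R i j * R k l = sc qv * R k l * R i j" if "i < k" "k < j" "j = l"
      using that idx qcomm_triple_Eroot[of i k j] by (simp add: qcomm_triple_def)
    show "R i j * R k l = R k l * R i j + (sc qv - sc (inverse qv)) * R i l * R k j"
      if "i < k" "k < j" "j < l"
      using that idx by (simp add: Eroot_crossing)
  qed
qed

end
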